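(* If $n\ge4$, then $r^D_\alpha$ is odd for every pseudo-composition $\alpha$ of $n$; that is, $c^D_{2,0}(n)=0$ and $c^D_{2,1}(n)=2^n$.
   Context: A signed permutation of $[n]$ is a bijection $w$ of $\{\pm1,\ldots,\pm n\}$ with $w(-i)=-w(i)$; it is even if an even number of $w(1),\ldots,w(n)$ are negative; these form $\mathfrak{S}^D_n$. With $w(0):=-w(2)$, $D(w)=\{i\in\{0,\ldots,n-1\}: w(i)>w(i+1)\}$. A pseudo-composition of $n$ ($\alpha\models_0 n$) is a sequence $(\alpha_1,\ldots,\alpha_\ell)$ of integers with $\alpha_1\ge0$, $\alpha_2,\ldots,\alpha_\ell>0$ and sum $n$, with $D(\alpha)=\{\alpha_1,\alpha_1+\alpha_2,\ldots,\alpha_1+\cdots+\alpha_{\ell-1}\}$. Then $r^D_\alpha=|\{w\in\mathfrak{S}^D_n: D(w)=D(\alpha)\}|$ and $c^D_{p,i}(n)=|\{\alpha\models_0 n: r^D_\alpha\equiv i\pmod p\}|$; there are $2^n$ pseudo-compositions of $n$. *)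

theory Defs
  imports Main
begin

text \<open>Signed permutations of [n], represented as functions on the integers that
  are bijections of {-n..n}-{0} onto itself, odd (w(-i) = -w(i)), and the identity
  outside {-n..n} (so that the set of them is finite).\<close>
definition signed_perms :: "nat \<Rightarrow> (int \<Rightarrow> int) set" where
  "signed_perms n = {w. bij_betw w ({-int n..int n} - {0}) ({-int n..int n} - {0})
                        \<and> (\<forall>i. w (-i) = - w i)
                        \<and> (\<forall>i. \<bar>i\<bar> > int n \<longrightarrow> w i = i)}"

definition even_signed_perms :: "nat \<Rightarrow> (int \<Rightarrow> int) set" where
  "even_signed_perms n = {w \<in> signed_perms n. even (card {i \<in> {1..int n}. w i < 0})}"

definition wD :: "(int \<Rightarrow> int) \<Rightarrow> nat \<Rightarrow> int" where
  "wD w i = (if i = 0 then - w 2 else w (int i))"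

definition descD :: "nat \<Rightarrow> (int \<Rightarrow> int) \<Rightarrow> nat set" where
  "descD n w = {i \<in> {0..<n}. wD w i > wD w (Suc i)}"

definition pseudo_comp :: "nat \<Rightarrow> nat list \<Rightarrow> bool" where
  "pseudo_comp n \<alpha> \<longleftrightarrow> \<alpha> \<noteq> [] \<and> (\<forall>x \<in> set (tl \<alpha>). x > 0) \<and> sum_list \<alpha> = n"

definition desc_comp :: "nat list \<Rightarrow> nat set" where
  "desc_comp \<alpha> = {sum_list (take k \<alpha>) | k. 1 \<le> k \<and> k < length \<alpha>}"

definition rD :: "nat \<Rightarrow> nat list \<Rightarrow> nat" where
  "rD n \<alpha> = card {w \<in> even_signed_perms n. descD n w = desc_comp \<alpha>}"

definition cD :: "nat \<Rightarrow> nat \<Rightarrow> nat \<Rightarrow> nat" where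
  "cD p i n = card {\<alpha>. pseudo_comp n \<alpha> \<and> rD n \<alpha> mod p = i}"

end

theory Submission
  imports Defs "HOL-Library.FuncSet" "HOL-Library.Z2" "HOL-Library.Disjoint_Sets"
begin

(*
  Two sign-reversing involutions on the even signed permutations with a given descent set
  do the counting modulo 2.  Call k in {2..n} missing for w if it is never the larger of the
  absolute values of two adjacent entries w(j), w(j+1) with 1 <= j < n.  Reversing the signs
  of the values of absolute value 1 and k, for the least missing k, keeps evenness and every
  descent (also the one at 0, as w(0) = -w(2)), so modulo 2 only permutations without missing
  values count.  For these, j |-> max |w j| |w (j+1)| is a bijection onto {2..n}, which forces
  |w| to be increasing, i.e. the identity, once |w 1| < |w 2|.  That is the case when 0 and 1
  are both or neither descents, and then the descents together with evenness fix all signs,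
  leaving exactly one permutation.  Otherwise, exchanging
  the values 1 and 2 (with suitable signs) is a fixed-point-free involution that keeps all
  descents except the one at 0, so the classes of D and of D with 0 toggled have an even
  number of elements together, and the second one is odd by the first case.
*)

subsection \<open>Parity of involutions\<close>

lemma even_card_involution_no_fixpoints:
  assumes "finite A" "\<And>x. x \<in> A \<Longrightarrow> f x \<in> A" "\<And>x. x \<in> A \<Longrightarrow> f (f x) = x"
    "\<And>x. x \<in> A \<Longrightarrow> f x \<noteq> x"
  shows "even (card A)"
proof -
  have "(\<Sum>x\<in>A. 1 :: bit) = 0"
    by (rule sum_involution_eq_0[where h = f]) (use assms in auto)
  then have "of_nat (card A) = (0 :: bit)"
    by simp
  then show ?thesis
    by (metis even_of_nat even_zero)
qed

lemma even_card_involution_iff_fixpoints: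
  assumes "finite A" "\<And>x. x \<in> A \<Longrightarrow> f x \<in> A" "\<And>x. x \<in> A \<Longrightarrow> f (f x) = x"
  shows "even (card A) \<longleftrightarrow> even (card {x\<in>A. f x = x})"
proof -
  let ?F = "{x\<in>A. f x = x}"
  have "even (card (A - ?F))"
    by (rule even_card_involution_no_fixpoints[where f = f]) (use assms in auto)
  moreover have "card A = card ?F + card (A - ?F)"
    using card_Int_Diff[OF assms(1), of ?F] by (simp add: Int_absorb1)
  ultimately show ?thesis
    by simp
qed

lemma even_card_sym_diff_iff:
  assumes "finite A" "finite B"
  shows "even (card (sym_diff A B)) \<longleftrightarrow> even (card A + card B)"
proof -
  have "card (sym_diff A B) = card (A - B) + card (B - A)"
    using assms by (intro card_Un_disjoint) auto
  moreover have "card A = card (A \<inter> B) + card (A - B)" "card B = card (A \<inter> B) + card (B - A)"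
    using assms card_Int_Diff by (metis, metis Int_commute)
  ultimately have "card A + card B = card (sym_diff A B) + 2 * card (A \<inter> B)"
    by simp
  then show ?thesis
    by (metis even_add even_mult_iff even_numeral)
qed

lemma signed_permsD:
  assumes "w \<in> signed_perms n"
  shows "bij_betw w ({-int n..int n} - {0}) ({-int n..int n} - {0})"
    and "w (-i) = - w i"
    and "\<bar>i\<bar> > int n \<Longrightarrow> w i = i"
  using assms unfolding signed_perms_def by auto

lemma signed_perm_zero: "w \<in> signed_perms n \<Longrightarrow> w 0 = 0"
  using signed_permsD(2)[of w n 0] by simp

lemma signed_perm_in_range:
  assumes "w \<in> signed_perms n" "i \<in> {-int n..int n} - {0}"
  shows "w i \<in> {-int n..int n} - {0}"
  using bij_betw_imp_surj_on[OF signed_permsD(1)[OF assms(1)]] assms(2) by blast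

lemma signed_perm_abs_bounds:
  assumes "w \<in> signed_perms n" "1 \<le> i" "i \<le> int n"
  shows "1 \<le> \<bar>w i\<bar>" "\<bar>w i\<bar> \<le> int n"
  using signed_perm_in_range[OF assms(1), of i] assms(2,3) by auto

lemma signed_perm_nonzero: "w \<in> signed_perms n \<Longrightarrow> 1 \<le> i \<Longrightarrow> i \<le> int n \<Longrightarrow> w i \<noteq> 0"
  using signed_perm_abs_bounds(1) by fastforce

lemma signed_perm_abs_inj:
  assumes "w \<in> signed_perms n" "i \<in> {1..int n}" "j \<in> {1..int n}" "\<bar>w i\<bar> = \<bar>w j\<bar>"
  shows "i = j"
proof -
  have inj: "inj_on w ({-int n..int n} - {0})"
    using bij_betw_imp_inj_on[OF signed_permsD(1)[OF assms(1)]] .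
  have "w i = w j \<or> w i = w (-j)"
    using assms(4) signed_permsD(2)[OF assms(1), of j] by (auto simp: abs_if split: if_splits)
  then show ?thesis
    using inj assms(2,3) by (auto dest!: inj_onD)
qed

lemma signed_perm_abs_surj:
  assumes "w \<in> signed_perms n" "v \<in> {1..int n}"
  obtains i where "i \<in> {1..int n}" "\<bar>w i\<bar> = v"
proof -
  have "v \<in> w ` ({-int n..int n} - {0})"
    using bij_betw_imp_surj_on[OF signed_permsD(1)[OF assms(1)]] assms(2) by auto
  then obtain i where i: "i \<in> {-int n..int n} - {0}" "w i = v"
    by blast
  then have "\<bar>i\<bar> \<in> {1..int n}" "\<bar>w \<bar>i\<bar>\<bar> = v"
    using assms(2) signed_permsD(2)[OF assms(1), of i] by (auto simp: abs_if)
  then show ?thesis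
    using that by blast
qed

lemma card_signed_perm_abs_preimage:
  assumes "w \<in> signed_perms n" "K \<subseteq> {1..int n}"
  shows "card {i\<in>{1..int n}. \<bar>w i\<bar> \<in> K} = card K"
proof -
  let ?P = "{i\<in>{1..int n}. \<bar>w i\<bar> \<in> K}"
  have "inj_on (\<lambda>i. \<bar>w i\<bar>) ?P"
    by (rule inj_onI) (use signed_perm_abs_inj[OF assms(1)] in auto)
  moreover have "(\<lambda>i. \<bar>w i\<bar>) ` ?P = K"
    using assms(2) by (force elim: signed_perm_abs_surj[OF assms(1)])
  ultimately show ?thesis
    using card_image by fastforce
qed

lemma signed_perm_eqI:
  assumes "w \<in> signed_perms n" "w' \<in> signed_perms n" "\<And>i. i \<in> {1..int n} \<Longrightarrow> w i = w' i"
  shows "w = w'"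
proof
  fix i
  consider "i = 0" | "\<bar>i\<bar> > int n" | "i \<in> {1..int n}" | "-i \<in> {1..int n}"
    by fastforce
  then show "w i = w' i"
  proof cases
    case 4
    then show ?thesis
      using assms(3)[of "-i"] signed_permsD(2)[OF assms(1), of "-i"] signed_permsD(2)[OF assms(2), of "-i"]
      by simp
  qed (use assms signed_perm_zero[OF assms(1)] signed_perm_zero[OF assms(2)]
         signed_permsD(3)[OF assms(1)] signed_permsD(3)[OF assms(2)] in auto)
qed

lemma signed_perm_comp_involution:
  assumes "w \<in> signed_perms n" "\<And>v. h (-v) = - h v"
    "\<And>v. v \<in> {-int n..int n} - {0} \<Longrightarrow> h v \<in> {-int n..int n} - {0}"
    "\<And>v. h (h v) = v" "\<And>v. \<bar>v\<bar> > int n \<Longrightarrow> h v = v"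
  shows "h \<circ> w \<in> signed_perms n"
proof -
  have "bij_betw h ({-int n..int n} - {0}) ({-int n..int n} - {0})"
    by (rule bij_betw_byWitness[where f' = h]) (use assms(3,4) in auto)
  then have "bij_betw (h \<circ> w) ({-int n..int n} - {0}) ({-int n..int n} - {0})"
    using bij_betw_trans[OF signed_permsD(1)[OF assms(1)]] by blast
  then show ?thesis
    unfolding signed_perms_def using assms signed_permsD[OF assms(1)] by auto
qed

lemma finite_signed_perms: "finite (signed_perms n)"
proof -
  let ?I = "{-int n..int n}"
  let ?extend = "\<lambda>g i. if i \<in> ?I then g i else i"
  have "signed_perms n \<subseteq> ?extend ` (?I \<rightarrow>\<^sub>E ?I)"
  proof
    fix w assume w: "w \<in> signed_perms n"
    have "w = ?extend (restrict w ?I)"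
      using signed_permsD(3)[OF w] by (auto simp: fun_eq_iff)
    moreover have "restrict w ?I \<in> ?I \<rightarrow>\<^sub>E ?I"
      using signed_perm_in_range[OF w] signed_perm_zero[OF w] by fastforce
    ultimately show "w \<in> ?extend ` (?I \<rightarrow>\<^sub>E ?I)"
      by blast
  qed
  then show ?thesis
    using finite_subset by (blast intro: finite_PiE)
qed

lemma finite_even_signed_perms: "finite (even_signed_perms n)"
  using finite_signed_perms[of n] unfolding even_signed_perms_def by auto

definition neg_positions :: "nat \<Rightarrow> (int \<Rightarrow> int) \<Rightarrow> int set" where
  "neg_positions n w = {i\<in>{1..int n}. w i < 0}"

lemma even_signed_perms_iff:
  "w \<in> even_signed_perms n \<longleftrightarrow> w \<in> signed_perms n \<and> even (card (neg_positions n w))"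
  unfolding even_signed_perms_def neg_positions_def by auto

lemma even_neg_positions_flip_iff:
  assumes "w \<in> signed_perms n" "K \<subseteq> {1..int n}"
    "\<And>i. i \<in> {1..int n} \<Longrightarrow> h (w i) < 0 \<longleftrightarrow> (w i < 0) \<noteq> (\<bar>w i\<bar> \<in> K)"
  shows "even (card (neg_positions n (h \<circ> w))) \<longleftrightarrow> even (card (neg_positions n w) + card K)"
proof -
  let ?P = "{i\<in>{1..int n}. \<bar>w i\<bar> \<in> K}"
  have "neg_positions n (h \<circ> w) = sym_diff (neg_positions n w) ?P"
    unfolding neg_positions_def using assms(3) by auto
  moreover have "finite (neg_positions n w)" "finite ?P"
    unfolding neg_positions_def by (rule finite_subset[of _ "{1..int n}"]; auto)+
  ultimately show ?thesis
    using even_card_sym_diff_iff[of "neg_positions n w" ?P] card_signed_perm_abs_preimage[OF assms(1,2)]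
    by presburger
qed

lemma descD_iff: "i < n \<Longrightarrow> i \<in> descD n w \<longleftrightarrow> wD w (Suc i) < wD w i"
  unfolding descD_def by auto

lemma wD_pos: "1 \<le> i \<Longrightarrow> wD w i = w (int i)"
  unfolding wD_def by simp

lemma wD_Suc: "wD w (Suc i) = w (int i + 1)"
  unfolding wD_def by (simp add: add.commute)

lemma wD_comp: "(\<And>v. h (-v) = - h v) \<Longrightarrow> wD (h \<circ> w) i = h (wD w i)"
  unfolding wD_def by auto

lemma signed_perm_adjacent_abs_neq:
  "w \<in> signed_perms n \<Longrightarrow> j \<in> {1..<int n} \<Longrightarrow> \<bar>w j\<bar> \<noteq> \<bar>w (j + 1)\<bar>"
  using signed_perm_abs_inj[of w n j "j + 1"] by auto

definition adj_max :: "(int \<Rightarrow> int) \<Rightarrow> int \<Rightarrow> int" where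
  "adj_max w j = max \<bar>w j\<bar> \<bar>w (j + 1)\<bar>"

lemma adj_max_bounds:
  assumes "w \<in> signed_perms n" "j \<in> {1..<int n}"
  shows "adj_max w j \<in> {2..int n}"
  using signed_perm_adjacent_abs_neq[OF assms] signed_perm_abs_bounds[OF assms(1), of j]
    signed_perm_abs_bounds[OF assms(1), of "j + 1"] assms(2)
  unfolding adj_max_def by (auto simp: max_def)

text \<open>With the convention w(0) = -w(2), the comparison at position 0 involves the same
  absolute values as the one at position 1.\<close>
lemma wD_adjacent_pair:
  assumes "w \<in> signed_perms n" "2 \<le> n" "i < n"
  obtains j where "j \<in> {1..<int n}" "\<bar>wD w i\<bar> \<noteq> \<bar>wD w (Suc i)\<bar>"
    "max \<bar>wD w i\<bar> \<bar>wD w (Suc i)\<bar> = adj_max w j"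
proof (cases "i = 0")
  case True
  then show ?thesis
    using that[of 1] signed_perm_adjacent_abs_neq[OF assms(1), of 1] assms(2)
    by (auto simp: wD_def adj_max_def max_def)
next
  case False
  then show ?thesis
    using that[of "int i"] signed_perm_adjacent_abs_neq[OF assms(1), of "int i"] assms(3)
    by (auto simp: wD_def adj_max_def add.commute)
qed

subsection \<open>Reversing the signs of 1 and of the least missing adjacent maximum\<close>

definition flip_signs :: "int set \<Rightarrow> int \<Rightarrow> int" where
  "flip_signs K v = (if \<bar>v\<bar> \<in> K then - v else v)"

lemma flip_signs_abs [simp]: "\<bar>flip_signs K v\<bar> = \<bar>v\<bar>"
  by (simp add: flip_signs_def)

lemma flip_signs_minus: "flip_signs K (-v) = - flip_signs K v"
  by (simp add: flip_signs_def)

lemma flip_signs_flip_signs [simp]: "flip_signs K (flip_signs K v) = v"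
  by (simp add: flip_signs_def)

text \<open>Two integers of distinct absolute values compare according to the sign of the one
  of larger absolute value.\<close>
lemma flip_signs_less_iff:
  assumes "\<bar>x\<bar> \<noteq> \<bar>y\<bar>" "max \<bar>x\<bar> \<bar>y\<bar> \<notin> K"
  shows "flip_signs K x < flip_signs K y \<longleftrightarrow> x < y"
  using assms unfolding flip_signs_def by (cases "\<bar>x\<bar> < \<bar>y\<bar>") (auto simp: max_def split: if_splits)

lemma descD_flip_signs:
  assumes "w \<in> signed_perms n" "2 \<le> n" "\<And>j. j \<in> {1..<int n} \<Longrightarrow> adj_max w j \<notin> K"
  shows "descD n (flip_signs K \<circ> w) = descD n w"
proof -
  have "wD (flip_signs K \<circ> w) (Suc i) < wD (flip_signs K \<circ> w) i \<longleftrightarrow> wD w (Suc i) < wD w i"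
    if i: "i < n" for i
  proof -
    obtain j where "j \<in> {1..<int n}" "\<bar>wD w i\<bar> \<noteq> \<bar>wD w (Suc i)\<bar>"
      "max \<bar>wD w i\<bar> \<bar>wD w (Suc i)\<bar> = adj_max w j"
      using wD_adjacent_pair[OF assms(1,2) i] .
    then show ?thesis
      unfolding wD_comp[of "flip_signs K", OF flip_signs_minus]
      using flip_signs_less_iff assms(3) by (metis max.commute)
  qed
  then show ?thesis
    unfolding descD_def by auto
qed

definition missing_maxima :: "nat \<Rightarrow> (int \<Rightarrow> int) \<Rightarrow> int set" where
  "missing_maxima n w = {k\<in>{2..int n}. \<forall>j\<in>{1..<int n}. adj_max w j \<noteq> k}"

lemma finite_missing_maxima: "finite (missing_maxima n w)"
  by (rule finite_subset[of _ "{2..int n}"]) (auto simp: missing_maxima_def)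

lemma missing_maxima_flip_signs: "missing_maxima n (flip_signs K \<circ> w) = missing_maxima n w"
  unfolding missing_maxima_def adj_max_def by simp

text \<open>If k is missing, no two adjacent entries have larger absolute value k (nor 1), so by
  flip_signs_less_iff reversing the signs of the values of absolute value 1 and k keeps
  all descents, and it keeps the number of negative entries even.\<close>
definition flip_missing :: "nat \<Rightarrow> (int \<Rightarrow> int) \<Rightarrow> int \<Rightarrow> int" where
  "flip_missing n w =
     (if missing_maxima n w = {} then w else flip_signs {1, Min (missing_maxima n w)} \<circ> w)"

lemma flip_missing_nontrivial:
  assumes "w \<in> even_signed_perms n" "2 \<le> n" "missing_maxima n w \<noteq> {}"
  shows "flip_missing n w \<in> even_signed_perms n" "descD n (flip_missing n w) = descD n w"
    "flip_missing n (flip_missing n w) = w" "flip_missing n w \<noteq> w"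
proof -
  have w: "w \<in> signed_perms n" "even (card (neg_positions n w))"
    using assms(1) even_signed_perms_iff by auto
  define k where "k = Min (missing_maxima n w)"
  have "k \<in> missing_maxima n w"
    unfolding k_def using assms(3) finite_missing_maxima by (rule Min_in[rotated])
  then have k: "k \<in> {2..int n}" "\<And>j. j \<in> {1..<int n} \<Longrightarrow> adj_max w j \<noteq> k"
    unfolding missing_maxima_def by auto
  have flip: "flip_missing n w = flip_signs {1, k} \<circ> w"
    using assms(3) unfolding flip_missing_def k_def by simp
  have "flip_signs {1, k} \<circ> w \<in> signed_perms n"
    by (rule signed_perm_comp_involution[OF w(1)]) (use k in \<open>auto simp: flip_signs_def\<close>)
  moreover have "even (card (neg_positions n (flip_signs {1, k} \<circ> w)))
      \<longleftrightarrow> even (card (neg_positions n w) + card {1, k})"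
    by (rule even_neg_positions_flip_iff[OF w(1)])
      (use k signed_perm_nonzero[OF w(1)] in \<open>auto simp: flip_signs_def\<close>)
  then have "even (card (neg_positions n (flip_signs {1, k} \<circ> w)))"
    using w(2) k by simp
  ultimately show "flip_missing n w \<in> even_signed_perms n"
    unfolding flip even_signed_perms_iff ..
  show "descD n (flip_missing n w) = descD n w"
    unfolding flip using adj_max_bounds[OF w(1)] k(2) by (intro descD_flip_signs[OF w(1) assms(2)]) force
  show "flip_missing n (flip_missing n w) = w"
    using assms(3) unfolding flip by (simp add: flip_missing_def missing_maxima_flip_signs k_def fun_eq_iff)
  obtain p where "p \<in> {1..int n}" "\<bar>w p\<bar> = 1"
    using signed_perm_abs_surj[OF w(1), of 1] assms(2) by auto
  then have "flip_missing n w p \<noteq> w p"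
    unfolding flip flip_signs_def by auto
  then show "flip_missing n w \<noteq> w"
    by auto
qed

lemma flip_missing_involution:
  assumes "w \<in> even_signed_perms n" "2 \<le> n"
  shows "flip_missing n w \<in> even_signed_perms n" "descD n (flip_missing n w) = descD n w"
    "flip_missing n (flip_missing n w) = w" "flip_missing n w = w \<longleftrightarrow> missing_maxima n w = {}"
  using flip_missing_nontrivial[OF assms] assms(1)
  by (cases "missing_maxima n w = {}"; simp add: flip_missing_def)+

lemma even_card_descent_class_iff_missing_empty:
  assumes "2 \<le> n"
  shows "even (card {w\<in>even_signed_perms n. descD n w = S})
     \<longleftrightarrow> even (card {w\<in>even_signed_perms n. descD n w = S \<and> missing_maxima n w = {}})"
proof -
  have "even (card {w\<in>even_signed_perms n. descD n w = S})
      \<longleftrightarrow> even (card {w\<in>{w\<in>even_signed_perms n. descD n w = S}. flip_missing n w = w})"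
    by (rule even_card_involution_iff_fixpoints)
      (use finite_even_signed_perms flip_missing_involution[OF _ assms] in auto)
  also have "{w\<in>{w\<in>even_signed_perms n. descD n w = S}. flip_missing n w = w}
      = {w\<in>even_signed_perms n. descD n w = S \<and> missing_maxima n w = {}}"
    using flip_missing_involution(4)[OF _ assms] by auto
  finally show ?thesis .
qed

subsection \<open>Permutations without missing adjacent maxima\<close>

lemma missing_maxima_empty_adj_max_inj:
  assumes "w \<in> signed_perms n" "missing_maxima n w = {}"
  shows "inj_on (adj_max w) {1..<int n}"
proof -
  have "adj_max w ` {1..<int n} = {2..int n}"
  proof
    show "adj_max w ` {1..<int n} \<subseteq> {2..int n}"
      using adj_max_bounds[OF assms(1)] by blast
    show "{2..int n} \<subseteq> adj_max w ` {1..<int n}"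
      using assms(2) unfolding missing_maxima_def by blast
  qed
  moreover have "card {2..int n} = card {1..<int n}"
    by simp
  ultimately show ?thesis
    by (intro eq_card_imp_inj_on) auto
qed

lemma missing_maxima_empty_abs_increasing:
  assumes "w \<in> signed_perms n" "missing_maxima n w = {}" "\<bar>w 1\<bar> < \<bar>w 2\<bar>" "j \<in> {1..<int n}"
  shows "\<bar>w j\<bar> < \<bar>w (j + 1)\<bar>"
proof -
  have "j < int n \<longrightarrow> \<bar>w j\<bar> < \<bar>w (j + 1)\<bar>" if "1 \<le> j" for j
    using that
  proof (induction j rule: int_ge_induct)
    case base
    show ?case
      using assms(3) by simp
  next
    case (step j)
    show ?case
    proof
      assume j: "j + 1 < int n"
      with step have less: "\<bar>w j\<bar> < \<bar>w (j + 1)\<bar>"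
        by simp
      show "\<bar>w (j + 1)\<bar> < \<bar>w (j + 1 + 1)\<bar>"
      proof (rule ccontr)
        assume "\<not> ?thesis"
        then have "adj_max w j = adj_max w (j + 1)"
          using less signed_perm_adjacent_abs_neq[OF assms(1), of "j + 1"] step.hyps j
          by (auto simp: adj_max_def max_def)
        then show False
          using inj_onD[OF missing_maxima_empty_adj_max_inj[OF assms(1,2)]] step.hyps j by fastforce
      qed
    qed
  qed
  then show ?thesis
    using assms(4) by simp
qed

lemma missing_maxima_empty_abs_id:
  assumes "w \<in> signed_perms n" "missing_maxima n w = {}" "\<bar>w 1\<bar> < \<bar>w 2\<bar>" "i \<in> {1..int n}"
  shows "\<bar>w i\<bar> = i"
proof -
  note increasing = missing_maxima_empty_abs_increasing[OF assms(1-3)]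
  have lower: "i \<le> int n \<longrightarrow> i \<le> \<bar>w i\<bar>" if "1 \<le> i" for i
    using that
  proof (induction i rule: int_ge_induct)
    case base
    show ?case
      using signed_perm_abs_bounds(1)[OF assms(1), of 1] by simp
  next
    case (step i)
    then show ?case
      using increasing[of i] by auto
  qed
  have upper: "1 \<le> i \<longrightarrow> \<bar>w i\<bar> \<le> i" if "i \<le> int n" for i
    using that
  proof (induction i rule: int_le_induct)
    case base
    show ?case
      using signed_perm_abs_bounds(2)[OF assms(1), of "int n"] by simp
  next
    case (step i)
    then show ?case
      using increasing[of "i - 1"] by auto
  qed
  show ?thesis
    using lower[of i] upper[of i] assms(4) by simp
qed

text \<open>Position 0 is a descent iff -w(2) > w(1), position 1 iff w(1) > w(2); when
  the absolute value of w(1) is the larger one, exactly one of these holds.\<close>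
lemma abs_less_if_descent_0_iff_1:
  assumes "w \<in> signed_perms n" "2 \<le> n" "0 \<in> descD n w \<longleftrightarrow> 1 \<in> descD n w"
  shows "\<bar>w 1\<bar> < \<bar>w 2\<bar>"
proof -
  have "\<bar>w 1\<bar> \<noteq> \<bar>w 2\<bar>"
    using signed_perm_adjacent_abs_neq[OF assms(1), of 1] assms(2) by simp
  moreover have "w 1 \<noteq> 0"
    using signed_perm_nonzero[OF assms(1), of 1] assms(2) by simp
  moreover have "0 \<in> descD n w \<longleftrightarrow> w 1 < - w 2" "1 \<in> descD n w \<longleftrightarrow> w 2 < w 1"
    using descD_iff[of 0 n w] descD_iff[of 1 n w] assms(2) by (simp_all add: wD_def)
  ultimately show ?thesis
    using assms(3) by (auto simp: abs_if split: if_splits)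
qed

lemma neg_iff_descent_if_abs_id:
  assumes "\<And>i. i \<in> {1..int n} \<Longrightarrow> \<bar>w i\<bar> = i" "i \<in> {2..int n}"
  shows "w i < 0 \<longleftrightarrow> nat (i - 1) \<in> descD n w"
proof -
  have "nat (i - 1) < n"
    using assms(2) by auto
  then have "nat (i - 1) \<in> descD n w \<longleftrightarrow> w i < w (i - 1)"
    using descD_iff[of "nat (i - 1)" n w] assms(2) by (simp add: wD_def)
  moreover have "\<bar>w (i - 1)\<bar> = i - 1" "\<bar>w i\<bar> = i"
    using assms(1)[of "i - 1"] assms(1)[of i] assms(2) by auto
  ultimately show ?thesis
    by (auto simp: abs_if split: if_splits)
qed

text \<open>The absolute values are forced to be the identity and the descents fix the signs of
  w(2), ..., w(n); the sign of w(1) is then fixed by evenness.\<close>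
lemma missing_maxima_empty_unique:
  assumes "2 \<le> n" "w \<in> even_signed_perms n" "w' \<in> even_signed_perms n"
    "descD n w' = descD n w" "missing_maxima n w = {}" "missing_maxima n w' = {}"
    "0 \<in> descD n w \<longleftrightarrow> 1 \<in> descD n w"
  shows "w = w'"
proof -
  have w: "w \<in> signed_perms n" "even (card (neg_positions n w))"
    and w': "w' \<in> signed_perms n" "even (card (neg_positions n w'))"
    using assms(2,3) even_signed_perms_iff by auto
  have id: "\<bar>w i\<bar> = i" if "i \<in> {1..int n}" for i
    using missing_maxima_empty_abs_id[OF w(1) assms(5) abs_less_if_descent_0_iff_1[OF w(1)]]
      assms(1,7) that by auto
  have id': "\<bar>w' i\<bar> = i" if "i \<in> {1..int n}" for i
    using missing_maxima_empty_abs_id[OF w'(1) assms(6) abs_less_if_descent_0_iff_1[OF w'(1)]]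
      assms(1,4,7) that by auto
  have tail: "w i = w' i" if "i \<in> {2..int n}" for i
    using neg_iff_descent_if_abs_id[OF id that] neg_iff_descent_if_abs_id[OF id' that] assms(4)
      id[of i] id'[of i] that by (auto simp: abs_if split: if_splits)
  define N where "N = {i\<in>{2..int n}. w i < 0}"
  have "finite N"
    unfolding N_def by (rule finite_subset[of _ "{2..int n}"]) auto
  moreover have "1 \<notin> N"
    unfolding N_def by simp
  moreover have "{1..int n} = insert 1 {2..int n}"
    using assms(1) by auto
  then have "neg_positions n w = (if w 1 < 0 then insert 1 N else N)"
    "neg_positions n w' = (if w' 1 < 0 then insert 1 N else N)"
    unfolding neg_positions_def N_def using tail by auto
  ultimately have "w 1 < 0 \<longleftrightarrow> w' 1 < 0"
    using w(2) w'(2) by (auto split: if_splits)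
  then have "w 1 = w' 1"
    using id[of 1] id'[of 1] assms(1) by (auto simp: abs_if split: if_splits)
  show ?thesis
  proof (rule signed_perm_eqI[OF w(1) w'(1)])
    fix i assume "i \<in> {1..int n}"
    then consider "i = 1" | "i \<in> {2..int n}"
      by fastforce
    then show "w i = w' i"
      using \<open>w 1 = w' 1\<close> tail by cases auto
  qed
qed

text \<open>Entry j \<ge> 2 is negative iff j - 1 is a descent; the sign of entry 1 makes the number
  of negative entries even.\<close>
definition canonical_sign :: "nat \<Rightarrow> nat set \<Rightarrow> int \<Rightarrow> int" where
  "canonical_sign n S j =
     (if j = 1 then (if even (card {i\<in>{2..int n}. nat (i - 1) \<in> S}) then 1 else -1)
      else if nat (j - 1) \<in> S then -1 else 1)"

definition canonical_perm :: "nat \<Rightarrow> nat set \<Rightarrow> int \<Rightarrow> int" where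
  "canonical_perm n S i = (if \<bar>i\<bar> \<in> {1..int n} then canonical_sign n S \<bar>i\<bar> * i else i)"

lemma canonical_sign_cases: "canonical_sign n S j = 1 \<or> canonical_sign n S j = -1"
  unfolding canonical_sign_def by auto

lemma abs_canonical_perm [simp]: "\<bar>canonical_perm n S i\<bar> = \<bar>i\<bar>"
  unfolding canonical_perm_def using canonical_sign_cases[of n S "\<bar>i\<bar>"] by (auto simp: abs_mult)

lemma canonical_perm_pos: "i \<in> {1..int n} \<Longrightarrow> canonical_perm n S i = canonical_sign n S i * i"
  unfolding canonical_perm_def by auto

lemma canonical_perm_signed_perm: "canonical_perm n S \<in> signed_perms n"
proof -
  have "canonical_perm n S \<circ> id \<in> signed_perms n"
  proof (rule signed_perm_comp_involution)
    show "id \<in> signed_perms n"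
      unfolding signed_perms_def by simp
    show "canonical_perm n S (canonical_perm n S v) = v" for v
      using canonical_sign_cases[of n S "\<bar>v\<bar>"] by (auto simp: canonical_perm_def)
    show "canonical_perm n S v \<in> {-int n..int n} - {0}" if "v \<in> {-int n..int n} - {0}" for v
      using that abs_canonical_perm[of n S v] by (auto simp: abs_if split: if_splits)
  qed (auto simp: canonical_perm_def)
  then show ?thesis
    by simp
qed

lemma canonical_perm_even: "1 \<le> n \<Longrightarrow> even (card (neg_positions n (canonical_perm n S)))"
proof -
  assume "1 \<le> n"
  define C where "C = {i\<in>{2..int n}. nat (i - 1) \<in> S}"
  have "finite C"
    unfolding C_def by (rule finite_subset[of _ "{2..int n}"]) auto
  moreover have "1 \<notin> C"
    unfolding C_def by simp
  moreover have neg: "canonical_perm n S i < 0 \<longleftrightarrow> canonical_sign n S i = -1" if "i \<in> {1..int n}" for i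
    using canonical_perm_pos[OF that] canonical_sign_cases[of n S i] that by auto
  have "{1..int n} = insert 1 {2..int n}"
    using \<open>1 \<le> n\<close> by auto
  then have "neg_positions n (canonical_perm n S) = (if odd (card C) then insert 1 C else C)"
    unfolding neg_positions_def C_def using neg by (auto simp: canonical_sign_def split: if_splits)
  ultimately show ?thesis
    by auto
qed

lemma descD_canonical_perm:
  assumes "2 \<le> n" "S \<subseteq> {0..<n}" "0 \<in> S \<longleftrightarrow> 1 \<in> S"
  shows "descD n (canonical_perm n S) = S"
proof -
  have "m \<in> descD n (canonical_perm n S) \<longleftrightarrow> m \<in> S" if m: "m < n" for m
  proof (cases "m = 0")
    case True
    have "wD (canonical_perm n S) 0 = - canonical_sign n S 2 * 2"
      "wD (canonical_perm n S) 1 = canonical_sign n S 1"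
      using canonical_perm_pos[of 2 n S] canonical_perm_pos[of 1 n S] assms(1) by (auto simp: wD_def)
    moreover have "canonical_sign n S 2 = (if 1 \<in> S then -1 else 1)"
      unfolding canonical_sign_def by simp
    ultimately show ?thesis
      using descD_iff[OF m] True assms(3) canonical_sign_cases[of n S 1] by auto
  next
    case False
    have "wD (canonical_perm n S) m = canonical_sign n S (int m) * int m"
      "wD (canonical_perm n S) (Suc m) = canonical_sign n S (int m + 1) * (int m + 1)"
      using canonical_perm_pos[of "int m" n S] canonical_perm_pos[of "int m + 1" n S] False m
      by (auto simp: wD_def add.commute)
    moreover have "canonical_sign n S (int m + 1) = (if m \<in> S then -1 else 1)"
      unfolding canonical_sign_def using False by simp
    ultimately show ?thesis
      using descD_iff[OF m] canonical_sign_cases[of n S "int m"] by auto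
  qed
  moreover have "descD n (canonical_perm n S) \<subseteq> {0..<n}"
    unfolding descD_def by auto
  ultimately show ?thesis
    using assms(2) by auto
qed

lemma missing_maxima_canonical_perm: "missing_maxima n (canonical_perm n S) = {}"
proof -
  have "adj_max (canonical_perm n S) (k - 1) = k" if "k \<in> {2..int n}" for k
    using that by (simp add: adj_max_def)
  then show ?thesis
    unfolding missing_maxima_def by force
qed

lemma card_descent_class_missing_empty:
  assumes "2 \<le> n" "S \<subseteq> {0..<n}" "0 \<in> S \<longleftrightarrow> 1 \<in> S"
  shows "card {w\<in>even_signed_perms n. descD n w = S \<and> missing_maxima n w = {}} = 1"
proof -
  have canonical: "canonical_perm n S \<in> even_signed_perms n"
    unfolding even_signed_perms_iff using canonical_perm_signed_perm canonical_perm_even assms(1)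
    by simp
  have "w = canonical_perm n S"
    if "w \<in> even_signed_perms n" "descD n w = S" "missing_maxima n w = {}" for w
    using missing_maxima_empty_unique[OF assms(1) canonical that(1)] descD_canonical_perm[OF assms]
      missing_maxima_canonical_perm assms(3) that(2,3) by simp
  then have "{w\<in>even_signed_perms n. descD n w = S \<and> missing_maxima n w = {}} = {canonical_perm n S}"
    using canonical descD_canonical_perm[OF assms] missing_maxima_canonical_perm by blast
  then show ?thesis
    by simp
qed

lemma odd_card_descent_class_if_0_iff_1:
  assumes "2 \<le> n" "S \<subseteq> {0..<n}" "0 \<in> S \<longleftrightarrow> 1 \<in> S"
  shows "odd (card {w\<in>even_signed_perms n. descD n w = S})"
  using even_card_descent_class_iff_missing_empty[OF assms(1)] card_descent_class_missing_empty[OF assms]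
  by simp

subsection \<open>Exchanging the absolute values 1 and 2\<close>

definition swap12 :: "bool \<Rightarrow> int \<Rightarrow> int" where
  "swap12 a v =
     (if \<bar>v\<bar> \<in> {1, 2} then (if a then -1 else 1) * sgn v * (3 - \<bar>v\<bar>) else v)"

lemma abs_in_1_2_iff: "\<bar>v :: int\<bar> \<in> {1, 2} \<longleftrightarrow> v \<in> {-2, -1, 1, 2}"
  by auto

lemma swap12_minus: "swap12 a (-v) = - swap12 a v"
  unfolding swap12_def by (simp add: sgn_minus)

lemma swap12_swap12 [simp]: "swap12 a (swap12 a v) = v"
  unfolding swap12_def abs_in_1_2_iff by auto

lemma abs_swap12: "\<bar>v\<bar> \<in> {1, 2} \<Longrightarrow> \<bar>swap12 a v\<bar> = 3 - \<bar>v\<bar>"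
  unfolding swap12_def abs_in_1_2_iff by auto

lemma swap12_neg_iff:
  "v \<noteq> 0 \<Longrightarrow> swap12 a v < 0 \<longleftrightarrow> (if a \<and> \<bar>v\<bar> \<in> {1, 2} then 0 < v else v < 0)"
  unfolding swap12_def abs_in_1_2_iff by auto

lemma swap12_pos_iff: "\<bar>v\<bar> \<in> {1, 2} \<Longrightarrow> 0 < swap12 a v \<longleftrightarrow> (0 < v) \<noteq> a"
  unfolding swap12_def abs_in_1_2_iff by auto

lemma swap12_less_iff:
  assumes "\<bar>x\<bar> \<noteq> \<bar>y\<bar>" "x \<noteq> 0" "y \<noteq> 0"
    "\<bar>x\<bar> \<in> {1, 2} \<Longrightarrow> \<bar>y\<bar> \<in> {1, 2} \<Longrightarrow> a \<longleftrightarrow> (0 < x \<longleftrightarrow> 0 < y)"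
  shows "swap12 a x < swap12 a y \<longleftrightarrow> x < y"
  using assms unfolding swap12_def abs_in_1_2_iff by auto

definition takes_value :: "nat \<Rightarrow> (int \<Rightarrow> int) \<Rightarrow> int \<Rightarrow> bool" where
  "takes_value n w v \<longleftrightarrow> (\<exists>i\<in>{1..int n}. w i = v)"

definition signs_1_2_agree :: "nat \<Rightarrow> (int \<Rightarrow> int) \<Rightarrow> bool" where
  "signs_1_2_agree n w \<longleftrightarrow> (takes_value n w 1 \<longleftrightarrow> takes_value n w 2)"

text \<open>The absolute values 1 and 2 are exchanged, and both signs are reversed when 1 and 2
  occur with the same sign.  This keeps the order of every pair of adjacent entries, hence
  every descent except possibly the one at 0, and keeps the number of negative entries even.\<close>
definition swap_1_2 :: "nat \<Rightarrow> (int \<Rightarrow> int) \<Rightarrow> int \<Rightarrow> int" where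
  "swap_1_2 n w = swap12 (signs_1_2_agree n w) \<circ> w"

lemma takes_value_iff:
  assumes "w \<in> signed_perms n" "p \<in> {1..int n}" "\<bar>w p\<bar> = \<bar>v\<bar>"
  shows "takes_value n w v \<longleftrightarrow> w p = v"
proof
  assume "takes_value n w v"
  then obtain j where "j \<in> {1..int n}" "w j = v"
    unfolding takes_value_def by auto
  moreover from this have "j = p"
    using signed_perm_abs_inj[OF assms(1) _ assms(2)] assms(3) by simp
  ultimately show "w p = v"
    by simp
qed (use assms(2) in \<open>auto simp: takes_value_def\<close>)

lemma signs_1_2_agree_iff:
  assumes "w \<in> signed_perms n" "p \<in> {1..int n}" "q \<in> {1..int n}" "\<bar>w p\<bar> = 1" "\<bar>w q\<bar> = 2"
  shows "signs_1_2_agree n w \<longleftrightarrow> (0 < w p \<longleftrightarrow> 0 < w q)"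
  using takes_value_iff[OF assms(1,2), of 1] takes_value_iff[OF assms(1,3), of 2] assms(4,5)
  unfolding signs_1_2_agree_def by (auto simp: abs_if split: if_splits)

lemma swap_1_2_signed_perm:
  assumes "w \<in> signed_perms n" "2 \<le> n"
  shows "swap_1_2 n w \<in> signed_perms n"
  unfolding swap_1_2_def
proof (rule signed_perm_comp_involution[OF assms(1)])
  show "swap12 (signs_1_2_agree n w) v \<in> {-int n..int n} - {0}" if "v \<in> {-int n..int n} - {0}" for v
  proof (cases "\<bar>v\<bar> \<in> {1, 2}")
    case True
    then have "\<bar>swap12 (signs_1_2_agree n w) v\<bar> \<in> {1, 2}"
      using abs_swap12 by auto
    then show ?thesis
      using assms(2) by auto
  qed (use that in \<open>simp add: swap12_def\<close>)
  show "swap12 (signs_1_2_agree n w) v = v" if "int n < \<bar>v\<bar>" for v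
    using that assms(2) by (simp add: swap12_def)
qed (simp_all add: swap12_minus)

lemma signs_1_2_agree_swap_1_2:
  assumes "w \<in> signed_perms n" "2 \<le> n"
  shows "signs_1_2_agree n (swap_1_2 n w) = signs_1_2_agree n w"
proof -
  obtain p where p: "p \<in> {1..int n}" "\<bar>w p\<bar> = 1"
    using signed_perm_abs_surj[OF assms(1), of 1] assms(2) by auto
  obtain q where q: "q \<in> {1..int n}" "\<bar>w q\<bar> = 2"
    using signed_perm_abs_surj[OF assms(1), of 2] assms(2) by auto
  note pq = p(1) q(1) p(2) q(2)
  let ?a = "signs_1_2_agree n w"
  have "\<bar>swap_1_2 n w q\<bar> = 1" "\<bar>swap_1_2 n w p\<bar> = 2"
    using abs_swap12[of "w p" ?a] abs_swap12[of "w q" ?a] pq by (auto simp: swap_1_2_def)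
  then have "signs_1_2_agree n (swap_1_2 n w) \<longleftrightarrow> (0 < swap12 ?a (w q) \<longleftrightarrow> 0 < swap12 ?a (w p))"
    using signs_1_2_agree_iff[OF swap_1_2_signed_perm[OF assms] pq(2,1)] by (simp add: swap_1_2_def)
  also have "\<dots> \<longleftrightarrow> (0 < w q \<longleftrightarrow> 0 < w p)"
    using pq(3,4) by (simp add: swap12_pos_iff) blast
  also have "\<dots> \<longleftrightarrow> ?a"
    using signs_1_2_agree_iff[OF assms(1) pq] by auto
  finally show ?thesis .
qed

lemma swap_1_2_swap_1_2:
  assumes "w \<in> signed_perms n" "2 \<le> n"
  shows "swap_1_2 n (swap_1_2 n w) = w"
  using signs_1_2_agree_swap_1_2[OF assms] by (simp add: swap_1_2_def fun_eq_iff)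

lemma swap_1_2_neq:
  assumes "w \<in> signed_perms n" "2 \<le> n"
  shows "swap_1_2 n w \<noteq> w"
proof -
  obtain p where "p \<in> {1..int n}" "\<bar>w p\<bar> = 1"
    using signed_perm_abs_surj[OF assms(1), of 1] assms(2) by auto
  then have "\<bar>swap_1_2 n w p\<bar> = 2"
    using abs_swap12[of "w p"] by (auto simp: swap_1_2_def)
  with \<open>\<bar>w p\<bar> = 1\<close> show ?thesis
    by auto
qed

lemma swap_1_2_even:
  assumes "w \<in> even_signed_perms n" "2 \<le> n"
  shows "even (card (neg_positions n (swap_1_2 n w)))"
proof -
  have w: "w \<in> signed_perms n" "even (card (neg_positions n w))"
    using assms(1) even_signed_perms_iff by auto
  show ?thesis
  proof (cases "signs_1_2_agree n w")
    case True
    have "even (card (neg_positions n (swap12 True \<circ> w)))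
        \<longleftrightarrow> even (card (neg_positions n w) + card {1, 2 :: int})"
      by (rule even_neg_positions_flip_iff[OF w(1)])
        (use assms(2) swap12_neg_iff signed_perm_nonzero[OF w(1)] in auto)
    then show ?thesis
      using w(2) True by (simp add: swap_1_2_def)
  next
    case False
    then have "neg_positions n (swap_1_2 n w) = neg_positions n w"
      unfolding neg_positions_def swap_1_2_def using swap12_neg_iff signed_perm_nonzero[OF w(1)]
      by auto
    then show ?thesis
      using w(2) by simp
  qed
qed

lemma descD_swap_1_2:
  assumes "w \<in> signed_perms n" "2 \<le> n"
  shows "descD n (swap_1_2 n w) - {0} = descD n w - {0}"
proof -
  let ?a = "signs_1_2_agree n w"
  have "swap12 ?a (w (i + 1)) < swap12 ?a (w i) \<longleftrightarrow> w (i + 1) < w i" if i: "i \<in> {1..<int n}" for i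
  proof (rule swap12_less_iff)
    have i': "i \<in> {1..int n}" "i + 1 \<in> {1..int n}"
      using i by auto
    show "\<bar>w (i + 1)\<bar> \<noteq> \<bar>w i\<bar>" "w (i + 1) \<noteq> 0" "w i \<noteq> 0"
      using signed_perm_adjacent_abs_neq[OF assms(1) i] signed_perm_nonzero[OF assms(1)] i' by auto
    assume "\<bar>w (i + 1)\<bar> \<in> {1, 2}" "\<bar>w i\<bar> \<in> {1, 2}"
    then consider "\<bar>w i\<bar> = 1" "\<bar>w (i + 1)\<bar> = 2" | "\<bar>w i\<bar> = 2" "\<bar>w (i + 1)\<bar> = 1"
      using \<open>\<bar>w (i + 1)\<bar> \<noteq> \<bar>w i\<bar>\<close> by auto
    then show "?a \<longleftrightarrow> (0 < w (i + 1) \<longleftrightarrow> 0 < w i)"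
    proof cases
      case 1
      then show ?thesis
        using signs_1_2_agree_iff[OF assms(1) i'] by auto
    next
      case 2
      then show ?thesis
        using signs_1_2_agree_iff[OF assms(1) i'(2,1)] by auto
    qed
  qed
  then have "m \<in> descD n (swap_1_2 n w) \<longleftrightarrow> m \<in> descD n w" if "m \<in> {1..<n}" for m
    using that descD_iff[of m n] by (simp add: swap_1_2_def wD_pos wD_Suc)
  then show ?thesis
    unfolding descD_def by auto
qed

lemma even_card_descent_class_minus_0:
  assumes "2 \<le> n"
  shows "even (card {w\<in>even_signed_perms n. descD n w - {0} = T})"
proof (rule even_card_involution_no_fixpoints[where f = "swap_1_2 n"])
  fix w assume "w \<in> {w\<in>even_signed_perms n. descD n w - {0} = T}"
  then have w: "w \<in> even_signed_perms n" "w \<in> signed_perms n" "descD n w - {0} = T"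
    using even_signed_perms_iff by auto
  show "swap_1_2 n w \<in> {w\<in>even_signed_perms n. descD n w - {0} = T}"
    using swap_1_2_signed_perm[OF w(2) assms] swap_1_2_even[OF w(1) assms] descD_swap_1_2[OF w(2) assms]
      w(3) even_signed_perms_iff by auto
  show "swap_1_2 n (swap_1_2 n w) = w" "swap_1_2 n w \<noteq> w"
    using swap_1_2_swap_1_2[OF w(2) assms] swap_1_2_neq[OF w(2) assms] by auto
qed (simp add: finite_even_signed_perms)

lemma odd_card_descent_class:
  assumes "2 \<le> n" "S \<subseteq> {0..<n}"
  shows "odd (card {w\<in>even_signed_perms n. descD n w = S})"
proof (cases "0 \<in> S \<longleftrightarrow> 1 \<in> S")
  case True
  then show ?thesis
    using odd_card_descent_class_if_0_iff_1[OF assms] by simp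
next
  case False
  let ?S' = "sym_diff S {0}"
  have "?S' \<subseteq> {0..<n}" "0 \<in> ?S' \<longleftrightarrow> 1 \<in> ?S'"
    using assms False by auto
  then have "odd (card {w\<in>even_signed_perms n. descD n w = ?S'})"
    by (rule odd_card_descent_class_if_0_iff_1[OF assms(1)])
  moreover have "{w\<in>even_signed_perms n. descD n w - {0} = S - {0}}
      = {w\<in>even_signed_perms n. descD n w = S} \<union> {w\<in>even_signed_perms n. descD n w = ?S'}"
    by blast
  moreover have "{w\<in>even_signed_perms n. descD n w = S} \<inter> {w\<in>even_signed_perms n. descD n w = ?S'} = {}"
    by blast
  ultimately show ?thesis
    using even_card_descent_class_minus_0[OF assms(1), of "S - {0}"] finite_even_signed_perms[of n]
    by (simp add: card_Un_disjoint)
qed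

subsection \<open>Pseudo-compositions\<close>

lemma desc_comp_subset:
  assumes "pseudo_comp n \<alpha>"
  shows "desc_comp \<alpha> \<subseteq> {0..<n}"
proof
  fix x assume "x \<in> desc_comp \<alpha>"
  then obtain k where k: "1 \<le> k" "k < length \<alpha>" "x = sum_list (take k \<alpha>)"
    unfolding desc_comp_def by auto
  have "\<alpha> ! k = tl \<alpha> ! (k - 1)" "k - 1 < length (tl \<alpha>)"
    using k by (cases \<alpha>; simp)+
  then have "0 < \<alpha> ! k"
    using assms nth_mem unfolding pseudo_comp_def by metis
  also have "\<alpha> ! k \<le> sum_list (drop k \<alpha>)"
    using k(2) by (intro member_le_sum_list) (simp_all add: Cons_nth_drop_Suc[symmetric])
  finally have "x < sum_list (take k \<alpha>) + sum_list (drop k \<alpha>)"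
    using k(3) by simp
  then show "x \<in> {0..<n}"
    using assms unfolding pseudo_comp_def by (simp flip: sum_list_append)
qed

lemma pseudo_comp_Suc_eq:
  "{\<alpha>. pseudo_comp (Suc n) \<alpha>} =
     (\<lambda>\<beta>. 0 # (hd \<beta> + 1) # tl \<beta>) ` {\<beta>. pseudo_comp n \<beta>} \<union> (\<lambda>\<beta>. (hd \<beta> + 1) # tl \<beta>) ` {\<beta>. pseudo_comp n \<beta>}"
  (is "?L = ?A \<union> ?B")
proof
  show "?L \<subseteq> ?A \<union> ?B"
  proof
    fix \<alpha> assume "\<alpha> \<in> ?L"
    then obtain a r where a: "\<alpha> = a # r" "\<forall>x\<in>set r. x > 0" "a + sum_list r = Suc n"
      unfolding pseudo_comp_def by (cases \<alpha>) auto
    show "\<alpha> \<in> ?A \<union> ?B"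
    proof (cases "a = 0")
      case True
      then obtain b r' where "r = b # r'" "b > 0"
        using a by (cases r) auto
      then have "pseudo_comp n ((b - 1) # r')" "\<alpha> = 0 # (hd ((b - 1) # r') + 1) # tl ((b - 1) # r')"
        using a True unfolding pseudo_comp_def by auto
      then show ?thesis
        by blast
    next
      case False
      then have "pseudo_comp n ((a - 1) # r)" "\<alpha> = (hd ((a - 1) # r) + 1) # tl ((a - 1) # r)"
        using a unfolding pseudo_comp_def by auto
      then show ?thesis
        by blast
    qed
  qed
  show "?A \<union> ?B \<subseteq> ?L"
  proof
    fix \<alpha> assume "\<alpha> \<in> ?A \<union> ?B"
    then obtain c r where "\<forall>x\<in>set r. x > 0" "c + sum_list r = n"
      "\<alpha> = 0 # (c + 1) # r \<or> \<alpha> = (c + 1) # r"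
      unfolding pseudo_comp_def by (auto simp: neq_Nil_conv)
    then show "\<alpha> \<in> ?L"
      unfolding pseudo_comp_def by auto
  qed
qed

lemma finite_card_pseudo_comp: "finite {\<alpha>. pseudo_comp n \<alpha>} \<and> card {\<alpha>. pseudo_comp n \<alpha>} = 2 ^ n"
proof (induction n)
  case 0
  have "\<alpha> = [0]" if \<alpha>: "pseudo_comp 0 \<alpha>" for \<alpha>
  proof -
    obtain r where "\<alpha> = 0 # r" "\<forall>x\<in>set r. 0 < x" "\<forall>x\<in>set r. x = 0"
      using \<alpha> unfolding pseudo_comp_def by (cases \<alpha>) auto
    then show ?thesis
      by (cases r) auto
  qed
  then have "{\<alpha>. pseudo_comp 0 \<alpha>} = {[0]}"
    by (auto simp: pseudo_comp_def)
  then show ?case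
    by simp
next
  case (Suc n)
  let ?P = "{\<beta>. pseudo_comp n \<beta>}"
  have "inj_on (\<lambda>\<beta>. 0 # (hd \<beta> + 1) # tl \<beta>) ?P" "inj_on (\<lambda>\<beta>. (hd \<beta> + 1) # tl \<beta>) ?P"
    by (auto intro!: inj_onI simp: pseudo_comp_def) (metis list.collapse)+
  then show ?case
    unfolding pseudo_comp_Suc_eq using Suc by (subst card_Un_disjoint) (auto simp: card_image)
qed

theorem corollary5p2:
  fixes n :: nat
  assumes "n \<ge> 4"
  shows "(\<forall>\<alpha>. pseudo_comp n \<alpha> \<longrightarrow> odd (rD n \<alpha>)) \<and> cD 2 0 n = 0 \<and> cD 2 1 n = 2 ^ n"
proof -
  have odd: "odd (rD n \<alpha>)" if "pseudo_comp n \<alpha>" for \<alpha>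
    unfolding rD_def using odd_card_descent_class desc_comp_subset[OF that] assms by simp
  then have "{\<alpha>. pseudo_comp n \<alpha> \<and> rD n \<alpha> mod 2 = 0} = {}"
    "{\<alpha>. pseudo_comp n \<alpha> \<and> rD n \<alpha> mod 2 = 1} = {\<alpha>. pseudo_comp n \<alpha>}"
    by (auto simp: odd_iff_mod_2_eq_one)
  then show ?thesis
    unfolding cD_def using odd finite_card_pseudo_comp[of n] by simp
qed

end
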